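(* Let $s\in\mathbb{R}$ be Gaussian distributed with variance $\sigma^2$ (arbitrary mean). Let $t\in\mathbb{R}$, $p\in(0,1/e]$, $L=8\sigma^{-1}\sqrt{\ln p^{-1}}$, and $0\le\varepsilon\le 1/L$. If $\Pr[s\ge t-\varepsilon]\ge p$ and $\Pr[s\le t]\ge p$, then \[ \Pr[s\ge t-\varepsilon\mid s\le t]\le e^3\varepsilon L\cdot\Pr[s\ge t]. \] *)

theory Defs
  imports "HOL-Probability.Probability"
begin

end

theory Submission
  imports Defs
begin

(* After standardising to Z = (s - \<mu>) / \<sigma>, x = (t - \<mu>) / \<sigma>, \<delta> = \<epsilon> / \<sigma>, the density \<phi> of Z
   changes by at most a factor exp (|x| \<delta>) on [x - \<delta>, x], so Pr[x - \<delta> \<le> Z \<le> x] \<le> \<delta> exp (|x| \<delta>) \<phi> x.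
   A Mills-type estimate on the side of x away from 0, together with a constant lower bound for
   the half-line containing 0, gives \<phi> x \<le> e^2 sqrt (2 pi) (1 + |x|) Pr[Z \<le> x] Pr[Z \<ge> x];
   dividing by Pr[Z \<le> x] leaves the factor Pr[Z \<ge> x].  Finally the two hypotheses
   Pr[...] \<ge> p and the crude tail bound Pr[|Z| \<ge> |y|] \<le> sqrt 2 exp (- y^2 / 4) confine |x| to
   3 sqrt (ln (1 / p)) + \<delta>, which makes |x| \<delta> \<le> 1/2 and 1 + |x| = O(sqrt (ln (1 / p))). *)

lemma distributed_prob_eq_nn_integral:
  assumes "prob_space M" and X: "distributed M lborel X f" and S: "S \<in> sets borel"
  shows "ennreal \<P>(\<omega> in M. X \<omega> \<in> S) = (\<integral>\<^sup>+u. f u * indicator S u \<partial>lborel)"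
proof -
  interpret prob_space M by fact
  have "{\<omega> \<in> space M. X \<omega> \<in> S} = X -` S \<inter> space M" by auto
  then show ?thesis
    using distributed_emeasure[OF X] S by (simp add: emeasure_eq_measure)
qed

lemma distributed_prob_interval_le:
  fixes f :: "real \<Rightarrow> ennreal"
  assumes "prob_space M" and X: "distributed M lborel X f"
    and "a \<le> b" and "0 \<le> K" and bound: "\<And>u. a \<le> u \<Longrightarrow> u \<le> b \<Longrightarrow> f u \<le> K"
  shows "\<P>(\<omega> in M. X \<omega> \<in> {a..b}) \<le> (b - a) * K"
proof -
  have "ennreal \<P>(\<omega> in M. X \<omega> \<in> {a..b}) = (\<integral>\<^sup>+u. f u * indicator {a..b} u \<partial>lborel)"
    by (rule distributed_prob_eq_nn_integral[OF assms(1) X]) simp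
  also have "\<dots> \<le> (\<integral>\<^sup>+u. ennreal K * indicator {a..b} u \<partial>lborel)"
    by (intro nn_integral_mono) (auto simp: indicator_def bound intro!: ennreal_leI)
  also have "\<dots> = ennreal ((b - a) * K)"
    using assms(3,4) by (subst nn_integral_cmult_indicator) (auto simp: ennreal_mult' mult.commute)
  finally show ?thesis
    using assms(3,4) by simp
qed

lemma distributed_prob_interval_ge:
  fixes f :: "real \<Rightarrow> ennreal"
  assumes "prob_space M" and X: "distributed M lborel X f"
    and "a \<le> b" and "0 \<le> K" and bound: "\<And>u. a \<le> u \<Longrightarrow> u \<le> b \<Longrightarrow> K \<le> f u"
  shows "(b - a) * K \<le> \<P>(\<omega> in M. X \<omega> \<in> {a..b})"
proof -
  have "ennreal ((b - a) * K) = (\<integral>\<^sup>+u. ennreal K * indicator {a..b} u \<partial>lborel)"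
    using assms(3,4) by (subst nn_integral_cmult_indicator) (auto simp: ennreal_mult' mult.commute)
  also have "\<dots> \<le> (\<integral>\<^sup>+u. f u * indicator {a..b} u \<partial>lborel)"
    by (intro nn_integral_mono) (auto simp: indicator_def bound intro!: ennreal_leI)
  also have "\<dots> = ennreal \<P>(\<omega> in M. X \<omega> \<in> {a..b})"
    by (rule distributed_prob_eq_nn_integral[OF assms(1) X, symmetric]) simp
  finally show ?thesis
    by simp
qed

lemma distributed_prob_mono:
  assumes "prob_space M" and "distributed M lborel X f"
    and "S \<subseteq> T" and "T \<in> sets borel"
  shows "\<P>(\<omega> in M. X \<omega> \<in> S) \<le> \<P>(\<omega> in M. X \<omega> \<in> T)"
proof -
  interpret prob_space M by fact
  have "X \<in> borel_measurable M"
    using assms(2) by (simp add: distributed_def)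
  then show ?thesis
    using assms(3,4) by (intro finite_measure_mono) auto
qed

lemma std_normal_density_le_exp_mult:
  assumes "x\<^sup>2 - k \<le> u\<^sup>2"
  shows "std_normal_density u \<le> exp (k / 2) * std_normal_density x"
proof -
  have "exp (- u\<^sup>2 / 2) \<le> exp (k / 2) * exp (- x\<^sup>2 / 2)"
    using assms by (simp flip: exp_add)
  then show ?thesis
    by (simp add: std_normal_density_def divide_right_mono)
qed

lemma std_normal_density_ge_exp_mult:
  assumes "u\<^sup>2 \<le> x\<^sup>2 + k"
  shows "exp (- k / 2) * std_normal_density x \<le> std_normal_density u"
proof -
  have "exp (- k / 2) * exp (- x\<^sup>2 / 2) \<le> exp (- u\<^sup>2 / 2)"
    using assms by (simp flip: exp_add)
  then show ?thesis
    by (simp add: std_normal_density_def divide_right_mono)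
qed

lemma std_normal_distributed_uminus:
  assumes "prob_space M" and "distributed M lborel Z std_normal_density"
  shows "distributed M lborel (\<lambda>\<omega>. - Z \<omega>) std_normal_density"
  using prob_space.normal_density_affine[OF assms, of "-1" 0] by simp

lemma std_normal_prob_le_sqrt2_exp:
  assumes "prob_space M" and Z: "distributed M lborel Z std_normal_density"
    and S: "S \<in> sets borel" and far: "\<And>u. u \<in> S \<Longrightarrow> y\<^sup>2 \<le> u\<^sup>2"
  shows "\<P>(\<omega> in M. Z \<omega> \<in> S) \<le> sqrt 2 * exp (- y\<^sup>2 / 4)"
proof -
  let ?c = "sqrt 2 * exp (- y\<^sup>2 / 4)"
  (* On S the density is dominated by ?c times the N(0, 2) density, which has total mass 1. *)
  have dominated: "std_normal_density u \<le> ?c * normal_density 0 (sqrt 2) u" if "u \<in> S" for u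
  proof -
    have "exp (- u\<^sup>2 / 2) = exp (- u\<^sup>2 / 4) * exp (- u\<^sup>2 / 4)"
      by (simp flip: exp_add)
    also have "\<dots> \<le> exp (- y\<^sup>2 / 4) * exp (- u\<^sup>2 / 4)"
      using far[OF that] by (intro mult_right_mono) auto
    also have "\<dots> / sqrt (2 * pi) = ?c * normal_density 0 (sqrt 2) u"
      by (simp add: normal_density_def real_sqrt_mult field_simps)
    finally show ?thesis
      by (simp add: std_normal_density_def divide_right_mono)
  qed
  have "ennreal \<P>(\<omega> in M. Z \<omega> \<in> S) = (\<integral>\<^sup>+u. ennreal (std_normal_density u) * indicator S u \<partial>lborel)"
    by (rule distributed_prob_eq_nn_integral[OF assms(1) Z S])
  also have "\<dots> \<le> (\<integral>\<^sup>+u. ennreal ?c * normal_density 0 (sqrt 2) u \<partial>lborel)"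
    by (intro nn_integral_mono)
      (use dominated in \<open>auto simp: indicator_def ennreal_mult'[symmetric] intro!: ennreal_leI\<close>)
  also have "\<dots> = ennreal ?c"
    by (subst nn_integral_cmult) (auto simp: nn_integral_eq_integral)
  finally show ?thesis
    by simp
qed

lemma std_normal_prob_ge_imp_sq_le:
  assumes "prob_space M" and "distributed M lborel Z std_normal_density"
    and "S \<in> sets borel" and "\<And>u. u \<in> S \<Longrightarrow> y\<^sup>2 \<le> u\<^sup>2"
    and "0 < p" and "p \<le> \<P>(\<omega> in M. Z \<omega> \<in> S)"
  shows "y\<^sup>2 \<le> 4 * ln (1 / p) + 2"
proof -
  have "p \<le> sqrt 2 * exp (- y\<^sup>2 / 4)"
    using assms(6) std_normal_prob_le_sqrt2_exp[OF assms(1-4)] by linarith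
  then have "ln p \<le> ln (sqrt 2 * exp (- y\<^sup>2 / 4))"
    using \<open>0 < p\<close> by simp
  then have "ln p \<le> ln 2 / 2 - y\<^sup>2 / 4"
    by (simp add: ln_mult ln_sqrt)
  then show ?thesis
    using ln_2_less_1 \<open>0 < p\<close> by (simp add: ln_div)
qed

lemma std_normal_prob_interval_le:
  assumes "prob_space M" and "distributed M lborel Z std_normal_density" and "0 \<le> \<delta>"
  shows "\<P>(\<omega> in M. Z \<omega> \<in> {x - \<delta>..x}) \<le> \<delta> * (exp (\<bar>x\<bar> * \<delta>) * std_normal_density x)"
proof -
  have "std_normal_density u \<le> exp (\<bar>x\<bar> * \<delta>) * std_normal_density x"
    if "x - \<delta> \<le> u" "u \<le> x" for u
  proof -
    have "x * (x - u) \<le> \<bar>x\<bar> * (x - u)"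
      using that by (intro mult_right_mono) auto
    also have "\<dots> \<le> \<bar>x\<bar> * \<delta>"
      using that by (intro mult_left_mono) auto
    finally have "x * (x - u) \<le> \<bar>x\<bar> * \<delta>" .
    moreover have "u\<^sup>2 = x\<^sup>2 - 2 * (x * (x - u)) + (x - u)\<^sup>2"
      by (simp add: power2_eq_square algebra_simps)
    ultimately have "x\<^sup>2 - 2 * \<bar>x\<bar> * \<delta> \<le> u\<^sup>2"
      using zero_le_power2[of "x - u"] by linarith
    from std_normal_density_le_exp_mult[OF this] show ?thesis
      by simp
  qed
  then show ?thesis
    using distributed_prob_interval_le[OF assms(1,2), of "x - \<delta>" x] assms(3) by simp
qed

lemma std_normal_density_le_upper_tail:
  assumes "prob_space M" and Z: "distributed M lborel Z std_normal_density" and "0 \<le> x"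
  shows "exp (- 3 / 2) * std_normal_density x \<le> (1 + x) * \<P>(\<omega> in M. x \<le> Z \<omega>)"
proof -
  define h where "h = 1 / (1 + x)"
  have h: "0 < h" "h \<le> 1" "h * x \<le> 1" "(1 + x) * h = 1"
    using \<open>0 \<le> x\<close> by (auto simp: h_def field_simps)
  have "exp (- 3 / 2) * std_normal_density x \<le> std_normal_density u"
    if "x \<le> u" "u \<le> x + h" for u
  proof (rule std_normal_density_ge_exp_mult)
    have "u\<^sup>2 \<le> (x + h)\<^sup>2"
      using that \<open>0 \<le> x\<close> by (intro power_mono) auto
    also have "\<dots> = x\<^sup>2 + 2 * (h * x) + h * h"
      by (simp add: power2_eq_square algebra_simps)
    also have "\<dots> \<le> x\<^sup>2 + 3"
      using h mult_le_one[of h h] by simp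
    finally show "u\<^sup>2 \<le> x\<^sup>2 + 3" .
  qed
  then have "h * (exp (- 3 / 2) * std_normal_density x) \<le> \<P>(\<omega> in M. Z \<omega> \<in> {x..x + h})"
    using distributed_prob_interval_ge[OF assms(1) Z, of x "x + h"] h by simp
  also have "\<dots> \<le> \<P>(\<omega> in M. Z \<omega> \<in> {x..})"
    by (rule distributed_prob_mono[OF assms(1) Z]) auto
  finally have "(1 + x) * (h * (exp (- 3 / 2) * std_normal_density x))
      \<le> (1 + x) * \<P>(\<omega> in M. Z \<omega> \<in> {x..})"
    using \<open>0 \<le> x\<close> by (intro mult_left_mono) auto
  then show ?thesis
    using h(4) by (simp add: mult.assoc[symmetric])
qed

lemma std_normal_prob_le_nonneg_bounded_below:
  assumes "prob_space M" and Z: "distributed M lborel Z std_normal_density" and "0 \<le> x"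
  shows "1 \<le> exp (1 / 2) * sqrt (2 * pi) * \<P>(\<omega> in M. Z \<omega> \<le> x)"
proof -
  have "exp (- 1 / 2) * std_normal_density 0 \<le> std_normal_density u"
    if "- 1 \<le> u" "u \<le> 0" for u :: real
    using that by (intro std_normal_density_ge_exp_mult) (simp add: abs_square_le_1)
  then have "exp (- 1 / 2) / sqrt (2 * pi) \<le> \<P>(\<omega> in M. Z \<omega> \<in> {- 1..0})"
    using distributed_prob_interval_ge[OF assms(1) Z, of "- 1" 0] by (simp add: std_normal_density_def)
  also have "\<dots> \<le> \<P>(\<omega> in M. Z \<omega> \<in> {..x})"
    using \<open>0 \<le> x\<close> by (intro distributed_prob_mono[OF assms(1) Z]) auto
  finally show ?thesis
    by (simp add: field_simps exp_minus)
qed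

lemma std_normal_density_le_prob_product:
  assumes "prob_space M" and "distributed M lborel Z std_normal_density"
  shows "std_normal_density x
    \<le> exp 2 * sqrt (2 * pi) * (1 + \<bar>x\<bar>) * \<P>(\<omega> in M. Z \<omega> \<le> x) * \<P>(\<omega> in M. x \<le> Z \<omega>)"
proof -
  have nonneg_case: "std_normal_density y
      \<le> exp 2 * sqrt (2 * pi) * (1 + y) * \<P>(\<omega> in M. Y \<omega> \<le> y) * \<P>(\<omega> in M. y \<le> Y \<omega>)"
    if Y: "distributed M lborel Y std_normal_density" and "0 \<le> y" for Y y
  proof -
    let ?L = "\<P>(\<omega> in M. Y \<omega> \<le> y)" and ?R = "\<P>(\<omega> in M. y \<le> Y \<omega>)"
    have "std_normal_density y = exp (3 / 2) * (exp (- 3 / 2) * std_normal_density y)"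
      by (simp add: mult.assoc[symmetric] flip: exp_add)
    also have "\<dots> \<le> exp (3 / 2) * ((1 + y) * ?R)"
      using std_normal_density_le_upper_tail[OF assms(1) Y \<open>0 \<le> y\<close>] by simp
    also have "\<dots> \<le> exp (3 / 2) * ((1 + y) * ?R) * (exp (1 / 2) * sqrt (2 * pi) * ?L)"
      using mult_left_mono[OF std_normal_prob_le_nonneg_bounded_below[OF assms(1) Y \<open>0 \<le> y\<close>],
          of "exp (3 / 2) * ((1 + y) * ?R)"] \<open>0 \<le> y\<close>
      by simp
    also have "\<dots> = exp 2 * sqrt (2 * pi) * (1 + y) * ?L * ?R"
      by (simp add: ac_simps flip: exp_add)
    finally show ?thesis .
  qed
  show ?thesis
  proof (cases "0 \<le> x")
    case True
    then show ?thesis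
      using nonneg_case[OF assms(2)] by simp
  next
    case False
    then show ?thesis
      using nonneg_case[OF std_normal_distributed_uminus[OF assms], of "- x"]
      by (simp add: std_normal_density_def mult.commute[of _ "\<P>(\<omega> in M. Z \<omega> \<le> x)"] mult.assoc)
  qed
qed

lemma one_le_ln_inverse:
  fixes p :: real
  assumes "0 < p" and "p \<le> exp (- 1)"
  shows "1 \<le> ln (1 / p)"
proof -
  have "ln p \<le> ln (exp (- 1))"
    using assms by (subst ln_le_cancel_iff) auto
  then show ?thesis
    using \<open>0 < p\<close> by (simp add: ln_div)
qed

lemma std_normal_abs_le_of_prob_ge:
  assumes "prob_space M" and Z: "distributed M lborel Z std_normal_density"
    and "0 < p" and "p \<le> exp (- 1)" and "0 \<le> \<delta>"
    and left: "p \<le> \<P>(\<omega> in M. x - \<delta> \<le> Z \<omega>)" and right: "p \<le> \<P>(\<omega> in M. Z \<omega> \<le> x)"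
  shows "\<bar>x\<bar> \<le> 3 * sqrt (ln (1 / p)) + \<delta>"
proof -
  define l where "l = sqrt (ln (1 / p))"
  have l: "1 \<le> l" "l\<^sup>2 = ln (1 / p)"
    using one_le_ln_inverse[OF \<open>0 < p\<close> \<open>p \<le> exp (- 1)\<close>] by (simp_all add: l_def)
  have abs_le: "\<bar>y\<bar> \<le> 3 * l" if "y\<^sup>2 \<le> 4 * ln (1 / p) + 2" for y
  proof -
    have "y\<^sup>2 \<le> (3 * l)\<^sup>2"
      using that l mult_mono[of 1 l 1 l] by (simp add: power2_eq_square)
    with l(1) show ?thesis
      by (intro power2_le_iff_abs_le[THEN iffD1]) auto
  qed
  consider "x \<le> 0" | "0 \<le> x - \<delta>" | "0 < x" "x < \<delta>"
    by linarith
  then show ?thesis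
  proof cases
    case 1
    have "x\<^sup>2 \<le> 4 * ln (1 / p) + 2"
      using 1 right \<open>0 < p\<close>
      by (intro std_normal_prob_ge_imp_sq_le[OF assms(1) Z, of "{..x}"])
        (auto simp flip: abs_le_square_iff)
    then show ?thesis
      using abs_le \<open>0 \<le> \<delta>\<close> by (fastforce simp: l_def)
  next
    case 2
    have "(x - \<delta>)\<^sup>2 \<le> 4 * ln (1 / p) + 2"
      using 2 left \<open>0 < p\<close>
      by (intro std_normal_prob_ge_imp_sq_le[OF assms(1) Z, of "{x - \<delta>..}"])
        (auto intro!: power_mono)
    then show ?thesis
      using abs_le[of "x - \<delta>"] 2 \<open>0 \<le> \<delta>\<close> by (simp add: l_def)
  next
    case 3
    then show ?thesis
      using l(1) unfolding l_def by linarith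
  qed
qed

lemma exp_sqrt_two_pi_mult_le:
  assumes "0 \<le> a" and "a \<le> 33 / 8 * l"
  shows "exp (5 / 2) * sqrt (2 * pi) * a \<le> 8 * exp 3 * l"
proof -
  have "sqrt (2 * pi) \<le> sqrt ((29 / 10)\<^sup>2)"
    using pi_less_4 by (intro real_sqrt_le_mono) (simp add: power2_eq_square)
  then have "sqrt (2 * pi) * a \<le> 29 / 10 * (33 / 8 * l)"
    using assms by (intro mult_mono) auto
  also have "\<dots> \<le> 8 * exp (1 / 2) * l"
    using exp_ge_add_one_self[of "1 / 2 :: real"] assms
      mult_right_mono[of "29 / 10 * (33 / 8)" "8 * exp (1 / 2)" l]
    by simp
  finally have "exp (5 / 2) * (sqrt (2 * pi) * a) \<le> exp (5 / 2) * (8 * exp (1 / 2) * l)"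
    by simp
  moreover have "exp 3 = exp (5 / 2) * exp (1 / 2 :: real)"
    by (simp flip: exp_add)
  ultimately show ?thesis
    by (simp add: ac_simps)
qed

lemma std_normal_cond_prob_le:
  assumes "prob_space M" and Z: "distributed M lborel Z std_normal_density"
    and "0 < p" and "p \<le> exp (- 1)" and "0 \<le> \<delta>" and small: "8 * sqrt (ln (1 / p)) * \<delta> \<le> 1"
    and left: "p \<le> \<P>(\<omega> in M. x - \<delta> \<le> Z \<omega>)" and right: "p \<le> \<P>(\<omega> in M. Z \<omega> \<le> x)"
  shows "\<P>(\<omega> in M. x - \<delta> \<le> Z \<omega> \<bar> Z \<omega> \<le> x)
    \<le> exp 3 * (8 * sqrt (ln (1 / p)) * \<delta>) * \<P>(\<omega> in M. x \<le> Z \<omega>)"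
proof -
  define l where "l = sqrt (ln (1 / p))"
  have "1 \<le> l"
    using one_le_ln_inverse[OF \<open>0 < p\<close> \<open>p \<le> exp (- 1)\<close>] by (simp add: l_def)
  have "\<delta> \<le> 1 / 8"
    using small \<open>1 \<le> l\<close> mult_right_mono[of 1 l \<delta>] \<open>0 \<le> \<delta>\<close> by (simp add: l_def)
  have x_bound: "\<bar>x\<bar> \<le> 3 * l + \<delta>"
    unfolding l_def by (rule std_normal_abs_le_of_prob_ge[OF assms(1-5) left right])
  have "\<bar>x\<bar> * \<delta> \<le> (3 * l + \<delta>) * \<delta>"
    using x_bound \<open>0 \<le> \<delta>\<close> by (rule mult_right_mono)
  also have "\<dots> = 3 / 8 * (8 * l * \<delta>) + \<delta> * \<delta>"
    by (simp add: algebra_simps)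
  also have "\<dots> \<le> 1 / 2"
    using small \<open>0 \<le> \<delta>\<close> \<open>\<delta> \<le> 1 / 8\<close> mult_mono[of \<delta> "1 / 8" \<delta> "1 / 8"]
    unfolding l_def by linarith
  finally have "\<bar>x\<bar> * \<delta> \<le> 1 / 2" .
  let ?below = "\<P>(\<omega> in M. Z \<omega> \<le> x)" and ?above = "\<P>(\<omega> in M. x \<le> Z \<omega>)"
  have "\<P>(\<omega> in M. x - \<delta> \<le> Z \<omega> \<and> Z \<omega> \<le> x) \<le> \<delta> * (exp (\<bar>x\<bar> * \<delta>) * std_normal_density x)"
    using std_normal_prob_interval_le[OF assms(1) Z \<open>0 \<le> \<delta>\<close>, of x] by simp
  also have "\<dots> \<le> \<delta> * (exp (1 / 2) * std_normal_density x)"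
    using \<open>\<bar>x\<bar> * \<delta> \<le> 1 / 2\<close> \<open>0 \<le> \<delta>\<close> by (intro mult_left_mono mult_right_mono) auto
  also have "\<dots> \<le> \<delta> * (exp (1 / 2) * (exp 2 * sqrt (2 * pi) * (1 + \<bar>x\<bar>) * ?below * ?above))"
    using std_normal_density_le_prob_product[OF assms(1) Z, of x] \<open>0 \<le> \<delta>\<close>
    by (intro mult_left_mono) auto
  also have "\<dots> = \<delta> * (exp (5 / 2) * sqrt (2 * pi) * (1 + \<bar>x\<bar>) * ?below * ?above)"
    by (simp add: ac_simps flip: exp_add)
  also have "\<dots> \<le> \<delta> * (8 * exp 3 * l * ?below * ?above)"
    using exp_sqrt_two_pi_mult_le[of "1 + \<bar>x\<bar>" l] x_bound \<open>1 \<le> l\<close> \<open>\<delta> \<le> 1 / 8\<close> \<open>0 \<le> \<delta>\<close>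
    by (intro mult_left_mono mult_right_mono) auto
  finally have "\<P>(\<omega> in M. x - \<delta> \<le> Z \<omega> \<and> Z \<omega> \<le> x) \<le> exp 3 * (8 * l * \<delta>) * ?above * ?below"
    by (simp add: ac_simps)
  moreover have "0 < ?below"
    using right \<open>0 < p\<close> by linarith
  ultimately show ?thesis
    by (simp add: cond_prob_def l_def pos_divide_le_eq)
qed

theorem lemma4p8:
  fixes M :: "'a measure" and s :: "'a \<Rightarrow> real"
    and \<mu> \<sigma> t p L \<epsilon> :: real
  assumes "prob_space M"
    and "\<sigma> > 0"
    and "distributed M lborel s (normal_density \<mu> \<sigma>)"
    and "0 < p" and "p \<le> exp (-1)"
    and "L = 8 / \<sigma> * sqrt (ln (1 / p))"
    and "0 \<le> \<epsilon>" and "\<epsilon> \<le> 1 / L"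
    and "\<P>(\<omega> in M. s \<omega> \<ge> t - \<epsilon>) \<ge> p"
    and "\<P>(\<omega> in M. s \<omega> \<le> t) \<ge> p"
  shows "\<P>(\<omega> in M. s \<omega> \<ge> t - \<epsilon> \<bar> s \<omega> \<le> t)
           \<le> exp 3 * \<epsilon> * L * \<P>(\<omega> in M. s \<omega> \<ge> t)"
proof -
  define Z where "Z \<omega> = (s \<omega> - \<mu>) / \<sigma>" for \<omega>
  define x where "x = (t - \<mu>) / \<sigma>"
  define \<delta> where "\<delta> = \<epsilon> / \<sigma>"
  have Z: "distributed M lborel Z std_normal_density"
    using prob_space.normal_standard_normal_convert[OF assms(1,2)] assms(3)
    by (simp add: Z_def[abs_def])
  have events:
    "t - \<epsilon> \<le> s \<omega> \<longleftrightarrow> x - \<delta> \<le> Z \<omega>"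
    "s \<omega> \<le> t \<longleftrightarrow> Z \<omega> \<le> x"
    "t \<le> s \<omega> \<longleftrightarrow> x \<le> Z \<omega>" for \<omega>
    using \<open>\<sigma> > 0\<close> by (simp_all add: Z_def x_def \<delta>_def divide_le_cancel flip: diff_divide_distrib)
  have "\<epsilon> * L = 8 * sqrt (ln (1 / p)) * \<delta>"
    using assms(6) by (simp add: \<delta>_def)
  moreover have "\<epsilon> * L \<le> 1"
    using assms(7,8) mult_nonneg_nonpos[of \<epsilon> L]
    by (cases "0 < L") (auto simp: le_divide_eq mult.commute)
  moreover have "0 \<le> \<delta>"
    using assms(2,7) by (simp add: \<delta>_def)
  ultimately have
    "\<P>(\<omega> in M. x - \<delta> \<le> Z \<omega> \<bar> Z \<omega> \<le> x) \<le> exp 3 * (\<epsilon> * L) * \<P>(\<omega> in M. x \<le> Z \<omega>)"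
    using std_normal_cond_prob_le[OF assms(1) Z assms(4,5), of \<delta> x] assms(9,10)
    by (simp only: events)
  then show ?thesis
    by (simp only: events mult.assoc)
qed

end
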